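(* Let $G=(V,E)$ be a simple directed acyclic graph with capacities $C\in\mathbb{R}_{\ge 0}^E$, let $s,t\in V$ be such that a directed $s$-$t$ path exists, and let $\gamma$ satisfy $0<\gamma\le\min_{e\in E}C(e)$. For every $s$-$t$ flow $\mathbf{f}$ with $val(\mathbf{f})<\gamma$ there exists an $s$-$t$ flow $\mathbf{f}'$ with $val(\mathbf{f}')=\gamma$ such that $\Lambda(\mathbf{f}',P)\ge\Lambda(\mathbf{f},P)$ for every set of user paths $P$ (with any admissible initial flow values).
   Context: An $s$-$t$ flow is a vector $\mathbf{f}\in\mathbb{R}^E$ with $0\le\mathbf{f}(e)\le C(e)$ for all $e\in E$ and $\sum_{(u,v)\in E}\mathbf{f}(u,v)=\sum_{(v,u)\in E}\mathbf{f}(v,u)$ for all $v\in V\setminus\{s,t\}$; its value is $val(\mathbf{f})=\sum_{(s,u)\in E}\mathbf{f}(s,u)$. A set of user paths is a set $P=\{p_1,\dots,p_k\}$ of directed paths in $G$ (each viewed as a set of edges; they need not share endpoints nor be disjoint) together with initial flow values $\lambda_1,\dots,\lambda_k\ge 0$ satisfying $\sum_{i:e\in p_i}\lambda_i\le C(e)$ for all $e\in E$. For an $s$-$t$ flow $\mathbf{f}$, $T(\mathbf{f},P)$ is the optimal value of the linear program: maximize $\sum_i\tilde\lambda_i$ subject to $\sum_{i:e\in p_i}\tilde\lambda_i\le C(e)-\mathbf{f}(e)$ for all $e\in E$ and $0\le\tilde\lambda_i\le\lambda_i$ for all $i$. The throughput reduction is $\Lambda(\mathbf{f},P)=\sum_i\lambda_i-T(\mathbf{f},P)$.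 *)

theory Defs
  imports Complex_Main
begin

definition simple_dag :: "'v set \<Rightarrow> ('v \<times> 'v) set \<Rightarrow> bool" where
  "simple_dag V E \<longleftrightarrow> finite V \<and> E \<subseteq> V \<times> V \<and> (\<forall>v. (v, v) \<notin> E) \<and> (\<forall>v. (v, v) \<notin> E\<^sup>+)"

definition is_st_flow ::
  "'v set \<Rightarrow> ('v \<times> 'v) set \<Rightarrow> ('v \<times> 'v \<Rightarrow> real) \<Rightarrow> 'v \<Rightarrow> 'v \<Rightarrow> ('v \<times> 'v \<Rightarrow> real) \<Rightarrow> bool" where
  "is_st_flow V E C s t f \<longleftrightarrow>
     (\<forall>e\<in>E. 0 \<le> f e \<and> f e \<le> C e) \<and>
     (\<forall>v\<in>V - {s, t}. (\<Sum>e\<in>{e\<in>E. snd e = v}. f e) = (\<Sum>e\<in>{e\<in>E. fst e = v}. f e))"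

definition flow_val :: "('v \<times> 'v) set \<Rightarrow> 'v \<Rightarrow> ('v \<times> 'v \<Rightarrow> real) \<Rightarrow> real" where
  "flow_val E s f = (\<Sum>e\<in>{e\<in>E. fst e = s}. f e)"

definition dpath :: "('v \<times> 'v) set \<Rightarrow> 'v list \<Rightarrow> bool" where
  "dpath E xs \<longleftrightarrow> xs \<noteq> [] \<and> distinct xs \<and> (\<forall>i. Suc i < length xs \<longrightarrow> (xs ! i, xs ! Suc i) \<in> E)"

definition pedges :: "'v list \<Rightarrow> ('v \<times> 'v) set" where
  "pedges xs = set (zip xs (tl xs))"

definition user_paths ::
  "('v \<times> 'v) set \<Rightarrow> ('v \<times> 'v \<Rightarrow> real) \<Rightarrow> nat \<Rightarrow> (nat \<Rightarrow> 'v list) \<Rightarrow> (nat \<Rightarrow> real) \<Rightarrow> bool" where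
  "user_paths E C k p lam \<longleftrightarrow>
     (\<forall>i<k. dpath E (p i) \<and> 0 \<le> lam i) \<and>
     (\<forall>e\<in>E. (\<Sum>i\<in>{i. i < k \<and> e \<in> pedges (p i)}. lam i) \<le> C e)"

definition Tput ::
  "('v \<times> 'v) set \<Rightarrow> ('v \<times> 'v \<Rightarrow> real) \<Rightarrow> ('v \<times> 'v \<Rightarrow> real) \<Rightarrow> nat \<Rightarrow> (nat \<Rightarrow> 'v list) \<Rightarrow> (nat \<Rightarrow> real) \<Rightarrow> real" where
  "Tput E C f k p lam = Sup {(\<Sum>i<k. mu i) | mu.
      (\<forall>e\<in>E. (\<Sum>i\<in>{i. i < k \<and> e \<in> pedges (p i)}. mu i) \<le> C e - f e) \<and>
      (\<forall>i<k. 0 \<le> mu i \<and> mu i \<le> lam i)}"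

definition tred ::
  "('v \<times> 'v) set \<Rightarrow> ('v \<times> 'v \<Rightarrow> real) \<Rightarrow> ('v \<times> 'v \<Rightarrow> real) \<Rightarrow> nat \<Rightarrow> (nat \<Rightarrow> 'v list) \<Rightarrow> (nat \<Rightarrow> real) \<Rightarrow> real" where
  "tred E C f k p lam = (\<Sum>i<k. lam i) - Tput E C f k p lam"

end

theory Submission
  imports Defs
begin

text \<open>In a DAG no edge carries more than the value of an s-t flow: the edge leaves the set A
  of ancestors of its tail, no edge enters A from outside, so by conservation the edge flow is
  bounded by the net outflow of A, which is at most the outflow of s (t has no positive net
  outflow, since the descendants of t do not contain s). Hence adding
  \<open>\<gamma> - val(f)\<close> units of flow along a fixed s-t path keeps every edge within
  \<open>val(f) + (\<gamma> - val(f)) = \<gamma> \<le> C(e)\<close>. The new flow dominates the old one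
  edgewise, so every residual capacity shrinks, the LP defining T has fewer feasible points,
  and the throughput reduction can only grow.\<close>

definition outflow :: "('v \<times> 'v) set \<Rightarrow> ('v \<times> 'v \<Rightarrow> real) \<Rightarrow> 'v \<Rightarrow> real" where
  "outflow E f v = (\<Sum>e\<in>{e\<in>E. fst e = v}. f e)"

definition inflow :: "('v \<times> 'v) set \<Rightarrow> ('v \<times> 'v \<Rightarrow> real) \<Rightarrow> 'v \<Rightarrow> real" where
  "inflow E f v = (\<Sum>e\<in>{e\<in>E. snd e = v}. f e)"

lemma flow_val_eq_outflow: "flow_val E s f = outflow E f s"
  by (simp add: flow_val_def outflow_def)

lemma is_st_flow_iff:
  "is_st_flow V E C s t f \<longleftrightarrow>
     (\<forall>e\<in>E. 0 \<le> f e \<and> f e \<le> C e) \<and> (\<forall>v\<in>V - {s, t}. inflow E f v = outflow E f v)"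
  by (simp add: is_st_flow_def inflow_def outflow_def)

lemma simple_dagD:
  assumes "simple_dag V E"
  shows "finite V" "E \<subseteq> V \<times> V" "finite E" "acyclic E"
proof -
  show "finite V" "E \<subseteq> V \<times> V" "acyclic E"
    using assms by (auto simp: simple_dag_def acyclic_def)
  then show "finite E"
    by (meson finite_SigmaI finite_subset)
qed

lemma outflow_add: "outflow E (\<lambda>e. f e + g e) v = outflow E f v + outflow E g v"
  by (simp add: outflow_def sum.distrib)

lemma inflow_add: "inflow E (\<lambda>e. f e + g e) v = inflow E f v + inflow E g v"
  by (simp add: inflow_def sum.distrib)

lemma outflow_cmult: "outflow E (\<lambda>e. d * g e) v = d * outflow E g v"
  by (simp add: outflow_def sum_distrib_left)

lemma inflow_cmult: "inflow E (\<lambda>e. d * g e) v = d * inflow E g v"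
  by (simp add: inflow_def sum_distrib_left)

lemma outflow_nonneg: "\<forall>e\<in>E. 0 \<le> f e \<Longrightarrow> 0 \<le> outflow E f v"
  unfolding outflow_def by (rule sum_nonneg) auto

lemma inflow_nonneg: "\<forall>e\<in>E. 0 \<le> f e \<Longrightarrow> 0 \<le> inflow E f v"
  unfolding inflow_def by (rule sum_nonneg) auto

lemma sum_outflow:
  assumes "finite E" "finite X"
  shows "(\<Sum>v\<in>X. outflow E f v) = (\<Sum>e\<in>{e\<in>E. fst e \<in> X}. f e)"
proof -
  have "(\<Sum>v\<in>X. sum f {e \<in> {e\<in>E. fst e \<in> X}. fst e = v}) = (\<Sum>e\<in>{e\<in>E. fst e \<in> X}. f e)"
    by (rule sum.group) (use assms in auto)
  moreover have "v \<in> X \<Longrightarrow> {e \<in> {e\<in>E. fst e \<in> X}. fst e = v} = {e\<in>E. fst e = v}" for v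
    by auto
  ultimately show ?thesis
    by (simp add: outflow_def)
qed

lemma sum_inflow:
  assumes "finite E" "finite X"
  shows "(\<Sum>v\<in>X. inflow E f v) = (\<Sum>e\<in>{e\<in>E. snd e \<in> X}. f e)"
proof -
  have "(\<Sum>v\<in>X. sum f {e \<in> {e\<in>E. snd e \<in> X}. snd e = v}) = (\<Sum>e\<in>{e\<in>E. snd e \<in> X}. f e)"
    by (rule sum.group) (use assms in auto)
  moreover have "v \<in> X \<Longrightarrow> {e \<in> {e\<in>E. snd e \<in> X}. snd e = v} = {e\<in>E. snd e = v}" for v
    by auto
  ultimately show ?thesis
    by (simp add: inflow_def)
qed

lemma st_flow_cut_balance:
  assumes f: "is_st_flow V E C s t f" and "finite E" "finite X" "X \<subseteq> V"
  shows "(\<Sum>v\<in>X \<inter> {s, t}. outflow E f v - inflow E f v)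
       = (\<Sum>e\<in>{e\<in>E. fst e \<in> X}. f e) - (\<Sum>e\<in>{e\<in>E. snd e \<in> X}. f e)"
proof -
  have "(\<Sum>v\<in>X \<inter> {s, t}. outflow E f v - inflow E f v) = (\<Sum>v\<in>X. outflow E f v - inflow E f v)"
  proof (rule sum.mono_neutral_left)
    show "\<forall>v\<in>X - X \<inter> {s, t}. outflow E f v - inflow E f v = 0"
    proof
      fix v assume "v \<in> X - X \<inter> {s, t}"
      then have "v \<in> V - {s, t}"
        using \<open>X \<subseteq> V\<close> by auto
      then show "outflow E f v - inflow E f v = 0"
        using f by (simp add: is_st_flow_iff)
    qed
  qed (use assms in auto)
  also have "\<dots> = (\<Sum>v\<in>X. outflow E f v) - (\<Sum>v\<in>X. inflow E f v)"
    by (simp add: sum_subtractf)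
  finally show ?thesis
    using sum_outflow[OF assms(2,3)] sum_inflow[OF assms(2,3)] by simp
qed

lemma rtrancl_closed_in:
  assumes "E \<subseteq> V \<times> V" "(x, y) \<in> E\<^sup>*"
  shows "x \<in> V \<longleftrightarrow> y \<in> V"
  using assms trancl_subset_Sigma[OF assms(1)] by (auto dest: rtranclD)

lemma st_flow_sink_outflow_le_inflow:
  assumes "simple_dag V E" and f: "is_st_flow V E C s t f" and "t \<in> V" and st: "(s, t) \<in> E\<^sup>+"
  shows "outflow E f t \<le> inflow E f t"
proof -
  note dag = simple_dagD[OF assms(1)]
  define B where "B = E\<^sup>* `` {t}"
  have B: "B \<subseteq> V" "finite B"
    using rtrancl_closed_in[OF dag(2)] \<open>t \<in> V\<close> dag(1) by (auto simp: B_def intro: finite_subset)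
  have "s \<notin> B"
    using st dag(4) by (auto simp: B_def acyclic_def dest: trancl_rtrancl_trancl)
  then have B_terminals: "B \<inter> {s, t} = {t}"
    by (auto simp: B_def)
  have "{e\<in>E. fst e \<in> B} \<subseteq> {e\<in>E. snd e \<in> B}"
    by (auto simp: B_def intro: rtrancl_into_rtrancl)
  then have "(\<Sum>e\<in>{e\<in>E. fst e \<in> B}. f e) \<le> (\<Sum>e\<in>{e\<in>E. snd e \<in> B}. f e)"
    using f dag(3) by (intro sum_mono2) (auto simp: is_st_flow_def)
  then show ?thesis
    using st_flow_cut_balance[OF f dag(3) B(2,1)] B_terminals by simp
qed

lemma st_flow_edge_le_flow_val:
  assumes "simple_dag V E" and f: "is_st_flow V E C s t f" and "t \<in> V" "(s, t) \<in> E\<^sup>+"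
    and e: "e \<in> E"
  shows "f e \<le> flow_val E s f"
proof -
  note dag = simple_dagD[OF assms(1)]
  have f_nonneg: "\<forall>e\<in>E. 0 \<le> f e"
    using f by (simp add: is_st_flow_def)
  define A where "A = (E\<inverse>)\<^sup>* `` {fst e}"
  have A_V: "A \<subseteq> V"
    using rtrancl_closed_in[OF dag(2)] e dag(2) by (auto simp: A_def rtrancl_converse)
  then have A_finite: "finite A"
    using dag(1) finite_subset by auto
  have into_A: "{e\<in>E. snd e \<in> A} \<subseteq> {e\<in>E. fst e \<in> A}"
    by (auto simp: A_def intro: rtrancl_into_rtrancl)
  have "snd e \<notin> A"
    using e dag(4) by (auto simp: A_def acyclic_def rtrancl_converse dest: rtrancl_into_trancl2)
  then have e_leaves_A: "e \<in> {e\<in>E. fst e \<in> A} - {e\<in>E. snd e \<in> A}"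
    using e by (simp add: A_def)
  have "f e \<le> (\<Sum>e\<in>{e\<in>E. fst e \<in> A} - {e\<in>E. snd e \<in> A}. f e)"
    by (rule member_le_sum) (use e_leaves_A f_nonneg dag(3) in auto)
  also have "\<dots> = (\<Sum>e\<in>{e\<in>E. fst e \<in> A}. f e) - (\<Sum>e\<in>{e\<in>E. snd e \<in> A}. f e)"
    using into_A dag(3) by (simp add: sum_diff)
  also have "\<dots> = (\<Sum>v\<in>A \<inter> {s, t}. outflow E f v - inflow E f v)"
    using st_flow_cut_balance[OF f dag(3) A_finite A_V] by simp
  also have "\<dots> \<le> (\<Sum>v\<in>A \<inter> {s, t}. if s = v then flow_val E s f else 0)"
  proof (rule sum_mono)
    fix v assume "v \<in> A \<inter> {s, t}"
    then show "outflow E f v - inflow E f v \<le> (if s = v then flow_val E s f else 0)"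
      using st_flow_sink_outflow_le_inflow[OF assms(1-4)] inflow_nonneg[OF f_nonneg]
      by (auto simp: flow_val_eq_outflow)
  qed
  also have "\<dots> \<le> flow_val E s f"
    using A_finite outflow_nonneg[OF f_nonneg] by (simp add: flow_val_eq_outflow)
  finally show ?thesis .
qed

text \<open>The support invariant is what acyclicity acts on: it shows that the edge appended in
  the induction step carried no flow yet (so values stay in [0,1]) and that no flow enters x.\<close>

lemma trancl_unit_flow:
  assumes "finite E" "acyclic E" "(x, y) \<in> E\<^sup>+"
  shows "\<exists>g. (\<forall>e\<in>E. 0 \<le> g e \<and> g e \<le> 1) \<and>
    (\<forall>e\<in>E. g e \<noteq> 0 \<longrightarrow> (x, fst e) \<in> E\<^sup>* \<and> (snd e, y) \<in> E\<^sup>*) \<and>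
    (\<forall>v. outflow E g v - inflow E g v = (if v = x then 1 else 0) - (if v = y then 1 else 0))"
  using assms(3)
proof (induction rule: trancl_induct)
  case (base y)
  then show ?case
    by (intro exI[of _ "\<lambda>e. if e = (x, y) then 1 else 0"])
      (auto simp: outflow_def inflow_def sum.delta assms(1))
next
  case (step z y)
  then obtain g where g_01: "\<forall>e\<in>E. 0 \<le> g e \<and> g e \<le> 1"
    and g_support: "\<forall>e\<in>E. g e \<noteq> 0 \<longrightarrow> (x, fst e) \<in> E\<^sup>* \<and> (snd e, z) \<in> E\<^sup>*"
    and g_net: "\<forall>v. outflow E g v - inflow E g v = (if v = x then 1 else 0) - (if v = z then 1 else 0)"
    by blast
  define h :: "'a \<times> 'a \<Rightarrow> real" where "h e = (if e = (z, y) then 1 else 0)" for e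
  have h_net: "outflow E h v = (if v = z then 1 else 0)" "inflow E h v = (if v = y then 1 else 0)" for v
    using step(2) assms(1) by (auto simp: h_def outflow_def inflow_def sum.delta)
  have "g (z, y) = 0"
  proof (rule ccontr)
    assume "g (z, y) \<noteq> 0"
    then have "(y, z) \<in> E\<^sup>*"
      using g_support step(2) by auto
    with step(2) have "(z, z) \<in> E\<^sup>+"
      by (rule rtrancl_into_trancl2)
    with assms(2) show False
      by (simp add: acyclic_def)
  qed
  then have "\<forall>e\<in>E. 0 \<le> g e + h e \<and> g e + h e \<le> 1"
    using g_01 by (auto simp: h_def)
  moreover have "\<forall>e\<in>E. g e + h e \<noteq> 0 \<longrightarrow> (x, fst e) \<in> E\<^sup>* \<and> (snd e, y) \<in> E\<^sup>*"
    using g_support step(1,2) by (auto simp: h_def intro: rtrancl_into_rtrancl)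
  moreover have "\<forall>v. outflow E (\<lambda>e. g e + h e) v - inflow E (\<lambda>e. g e + h e) v
      = (if v = x then 1 else 0) - (if v = y then 1 else 0)"
  proof
    fix v
    show "outflow E (\<lambda>e. g e + h e) v - inflow E (\<lambda>e. g e + h e) v
      = (if v = x then 1 else 0) - (if v = y then 1 else 0)"
      using g_net[rule_format, of v] by (simp add: outflow_add inflow_add h_net)
  qed
  ultimately show ?case
    by (intro exI[of _ "\<lambda>e. g e + h e"]) blast
qed

lemma unit_st_flow_exists:
  assumes "finite E" "acyclic E" "(s, t) \<in> E\<^sup>+"
  obtains g where "\<forall>e\<in>E. 0 \<le> g e \<and> g e \<le> 1"
    and "\<forall>v. v \<notin> {s, t} \<longrightarrow> inflow E g v = outflow E g v"
    and "flow_val E s g = 1"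
proof -
  obtain g where g_01: "\<forall>e\<in>E. 0 \<le> g e \<and> g e \<le> 1"
    and g_support: "\<forall>e\<in>E. g e \<noteq> 0 \<longrightarrow> (s, fst e) \<in> E\<^sup>* \<and> (snd e, t) \<in> E\<^sup>*"
    and g_net: "\<forall>v. outflow E g v - inflow E g v = (if v = s then 1 else 0) - (if v = t then 1 else 0)"
    using trancl_unit_flow[OF assms] by blast
  have "s \<noteq> t"
    using assms(2,3) by (auto simp: acyclic_def)
  have "inflow E g s = 0"
    unfolding inflow_def
  proof (rule sum.neutral, intro ballI)
    fix e assume e: "e \<in> {e\<in>E. snd e = s}"
    show "g e = 0"
    proof (rule ccontr)
      assume "g e \<noteq> 0"
      then have "(s, fst e) \<in> E\<^sup>*"
        using g_support e by auto
      moreover have "(fst e, s) \<in> E"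
        using e by (cases e) auto
      ultimately have "(s, s) \<in> E\<^sup>+"
        by (rule rtrancl_into_trancl1)
      with assms(2) show False
        by (simp add: acyclic_def)
    qed
  qed
  then have "flow_val E s g = 1"
    using g_net[rule_format, of s] \<open>s \<noteq> t\<close> by (simp add: flow_val_eq_outflow)
  moreover have "\<forall>v. v \<notin> {s, t} \<longrightarrow> inflow E g v = outflow E g v"
  proof (intro allI impI)
    fix v assume "v \<notin> {s, t}"
    then show "inflow E g v = outflow E g v"
      using g_net[rule_format, of v] by simp
  qed
  ultimately show ?thesis
    using g_01 that by blast
qed

lemma st_flow_augment:
  assumes f: "is_st_flow V E C s t f"
    and g: "\<forall>v. v \<notin> {s, t} \<longrightarrow> inflow E g v = outflow E g v"
    and bounds: "\<forall>e\<in>E. 0 \<le> d * g e \<and> f e + d * g e \<le> C e"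
  shows "is_st_flow V E C s t (\<lambda>e. f e + d * g e)"
    and "flow_val E s (\<lambda>e. f e + d * g e) = flow_val E s f + d * flow_val E s g"
  using assms by (auto simp: is_st_flow_iff flow_val_eq_outflow outflow_add inflow_add
      outflow_cmult inflow_cmult)

lemma Tput_antimono:
  assumes "\<forall>e\<in>E. f e \<le> f' e \<and> f' e \<le> C e" and "\<forall>i<k. 0 \<le> lam i"
  shows "Tput E C f' k p lam \<le> Tput E C f k p lam"
proof -
  let ?feasible = "\<lambda>f mu.
      (\<forall>e\<in>E. (\<Sum>i\<in>{i. i < k \<and> e \<in> pedges (p i)}. mu i) \<le> C e - f e) \<and>
      (\<forall>i<k. 0 \<le> mu i \<and> mu i \<le> lam i)"
  let ?S = "\<lambda>f. {(\<Sum>i<k. mu i) | mu. ?feasible f mu}"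
  have "?S f' \<noteq> {}"
    using assms by (auto intro!: exI[of _ "\<lambda>_. 0"])
  moreover have "bdd_above (?S f)"
    by (rule bdd_aboveI[of _ "\<Sum>i<k. lam i"]) (auto intro!: sum_mono)
  moreover have "?feasible f mu" if "?feasible f' mu" for mu
    using that assms(1) by (meson diff_left_mono order_trans)
  then have "?S f' \<subseteq> ?S f"
    by blast
  ultimately have "Sup (?S f') \<le> Sup (?S f)"
    by (rule cSup_subset_mono)
  then show ?thesis
    by (simp add: Tput_def)
qed

lemma tred_mono:
  assumes "\<forall>e\<in>E. f e \<le> f' e \<and> f' e \<le> C e" and "user_paths E C k p lam"
  shows "tred E C f k p lam \<le> tred E C f' k p lam"
  using Tput_antimono[OF assms(1)] assms(2) by (simp add: tred_def user_paths_def)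

theorem mainTheorem1:
  fixes V :: "'v set" and E :: "('v \<times> 'v) set" and C :: "'v \<times> 'v \<Rightarrow> real"
    and s t :: 'v and \<gamma> :: real
  assumes "simple_dag V E"
    and "\<forall>e\<in>E. 0 \<le> C e"
    and "s \<in> V" and "t \<in> V"
    and "(s, t) \<in> E\<^sup>+"
    and "0 < \<gamma>" and "\<forall>e\<in>E. \<gamma> \<le> C e"
  shows "\<forall>f. is_st_flow V E C s t f \<and> flow_val E s f < \<gamma> \<longrightarrow>
           (\<exists>f'. is_st_flow V E C s t f' \<and> flow_val E s f' = \<gamma> \<and>
              (\<forall>k p lam. user_paths E C k p lam \<longrightarrow>
                  tred E C f' k p lam \<ge> tred E C f k p lam))"
proof (intro allI impI, elim conjE)
  fix f assume f: "is_st_flow V E C s t f" and val_f: "flow_val E s f < \<gamma>"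
  note dag = simple_dagD[OF assms(1)]
  obtain g where g_01: "\<forall>e\<in>E. 0 \<le> g e \<and> g e \<le> 1"
    and g_cons: "\<forall>v. v \<notin> {s, t} \<longrightarrow> inflow E g v = outflow E g v" and val_g: "flow_val E s g = 1"
    using unit_st_flow_exists[OF dag(3,4) assms(5)] .
  define d where "d = \<gamma> - flow_val E s f"
  have "0 < d"
    using val_f by (simp add: d_def)
  have bounds: "\<forall>e\<in>E. 0 \<le> d * g e \<and> f e + d * g e \<le> C e"
  proof
    fix e assume e: "e \<in> E"
    have "0 \<le> d * g e" "d * g e \<le> d"
      using g_01 e \<open>0 < d\<close> by (simp_all add: mult_left_le)
    moreover have "f e \<le> flow_val E s f"
      using st_flow_edge_le_flow_val[OF assms(1) f assms(4,5) e] .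
    moreover have "\<gamma> \<le> C e"
      using assms(7) e by blast
    ultimately show "0 \<le> d * g e \<and> f e + d * g e \<le> C e"
      unfolding d_def by linarith
  qed
  define f' where "f' = (\<lambda>e. f e + d * g e)"
  have "is_st_flow V E C s t f'" "flow_val E s f' = \<gamma>"
    using st_flow_augment[OF f g_cons bounds] val_g by (simp_all add: f'_def d_def)
  moreover have "tred E C f k p lam \<le> tred E C f' k p lam" if "user_paths E C k p lam" for k p lam
    using tred_mono[OF _ that] bounds by (simp add: f'_def)
  ultimately show "\<exists>f'. is_st_flow V E C s t f' \<and> flow_val E s f' = \<gamma> \<and>
      (\<forall>k p lam. user_paths E C k p lam \<longrightarrow> tred E C f' k p lam \<ge> tred E C f k p lam)"
    by blast
qed

end
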